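(* Let $f(z)=z\big(1+\sum_{n\ge1}c_nz^n\big)$ with $c_1,c_2,\dots$ regarded as independent variables, and let $f^{-1}(z)$ be its reverse series ($f\circ f^{-1}(z)=z$). For each integer $q$ write $(f^{-1}(z))^q=z^q\big(1+\sum_{n\ge1}\delta_n^qz^n\big)$ with $\delta_n^q$ polynomials in the $c_j$, and let a differential operator $L$ in the $c_j$ act on such series coefficientwise: $L[(f^{-1}(z))^q]=z^q\sum_{n\ge1}L[\delta_n^q]z^n$. Define the operators $$L_k=\partial_k+\sum_{n\ge1}(n+1)c_n\partial_{n+k}\ (k\ge1),\qquad L_0=\sum_{n\ge1}nc_n\partial_n,\qquad L_{-p}=\sum_{n\ge1}A_n^p\partial_n\ (p\ge1),$$ with $\partial_n=\partial/\partial c_n$ and $A_n^p$ as in the context. Then: (1) $L_k[f^{-1}(z)]=-[f^{-1}(z)]^{k+1}$ for $k\ge1$; (2) $L_0[f^{-1}(z)]=-f^{-1}(z)+z(f^{-1})'(z)$ and $L_{-1}[f^{-1}(z)]=-1+(1+2c_1z)(f^{-1})'(z)$; (3) $L_{-p}[f^{-1}(z)]=-[f^{-1}(z)]^{1-p}-\Lambda_p(z)(f^{-1})'(z)$ for $p\ge2$; in particular $\Lambda_p(z)$ is the unique function of the form $-z^{1-p}+\sum_{j=0}^{p-1}\alpha_jz^{1-j}$ such that $[f^{-1}(z)]^{1-p}+\Lambda_p(z)(f^{-1})'(z)$ expands as $\sum_{n\ge2}a_nz^n$; (4) $L_k[(f^{-1}(z))^{-k}]=k$ for $k\ge1$; (5)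 $L_{-p}[(f^{-1}(z))^p]=-p-\Lambda_p(z)\,\frac{d}{dz}[f^{-1}(z)]^p$ for $p\ge1$.
   Context: For $p\ge0$, $\Lambda_p$ denotes the unique function of the form $\Lambda_p(u)=-u^{1-p}+\sum_{j=0}^{p-1}\alpha_ju^{1-j}$ (with $\alpha_j$ polynomials in the $c_j$) such that the Laurent expansion at $z=0$ of $z^{1-p}f'(z)+\Lambda_p(f(z))$ contains only powers $z^n$ with $n\ge2$; e.g. $\Lambda_0(u)=-u$, $\Lambda_1(u)=-1-2c_1u$. The coefficients $A_n^p$ are defined by $z^{1-p}f'(z)+\Lambda_p(f(z))=\sum_{n\ge1}A_n^pz^{n+1}$. With these definitions $L_kf(z)=z^{k+1}f'(z)$ for $k\ge1$, $L_0f(z)=zf'(z)-f(z)$, and $L_{-p}f(z)=z^{1-p}f'(z)+\Lambda_p(f(z))$ for $p\ge1$. *)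

theory Defs
  imports "HOL-Analysis.Analysis" "HOL-Computational_Algebra.Formal_Laurent_Series"
begin

text \<open>The variables c_1, c_2, ... are modelled by a point c :: nat => real
  (the value c 0 is never used).  Quantities that are polynomials in the c_j
  are modelled as functions (nat => real) => real.\<close>

type_synonym cvec = "nat \<Rightarrow> real"

definition fser :: "cvec \<Rightarrow> real fps" where
  "fser c = Abs_fps (\<lambda>n. if n = 0 then 0 else if n = 1 then 1 else c (n - 1))"

definition finv :: "cvec \<Rightarrow> real fps" where
  "finv c = fps_inv (fser c)"

definition Gser :: "cvec \<Rightarrow> real fps" where
  "Gser c = fps_shift 1 (finv c)"

text \<open>(f^{-1}(z))^q = z^q * Gq c q, i.e. Gq c q = 1 + sum_n delta_n^q z^n\<close>
definition Gq :: "cvec \<Rightarrow> int \<Rightarrow> real fps" where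
  "Gq c q = (if 0 \<le> q then Gser c ^ nat q else inverse (Gser c ^ nat (- q)))"

definition pd :: "nat \<Rightarrow> (cvec \<Rightarrow> real) \<Rightarrow> cvec \<Rightarrow> real" where
  "pd n F c = deriv (\<lambda>t. F (c(n := t))) (c n)"

definition LamE :: "(nat \<Rightarrow> real) \<Rightarrow> nat \<Rightarrow> real fls \<Rightarrow> real fls" where
  "LamE \<alpha> p U = - (U powi (1 - int p)) + (\<Sum>j<p. fls_const (\<alpha> j) * U powi (1 - int j))"

definition fL :: "cvec \<Rightarrow> real fls" where
  "fL c = fps_to_fls (fser c)"

definition Lexpr :: "cvec \<Rightarrow> (nat \<Rightarrow> real) \<Rightarrow> nat \<Rightarrow> real fls" where
  "Lexpr c \<alpha> p = fls_X powi (1 - int p) * fls_deriv (fL c) + LamE \<alpha> p (fL c)"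

definition alpha :: "cvec \<Rightarrow> nat \<Rightarrow> nat \<Rightarrow> real" where
  "alpha c p = (THE \<alpha>. (\<forall>j\<ge>p. \<alpha> j = 0) \<and> (\<forall>n<2. fls_nth (Lexpr c \<alpha> p) n = 0))"

definition Lam :: "cvec \<Rightarrow> nat \<Rightarrow> real fls \<Rightarrow> real fls" where
  "Lam c p U = LamE (alpha c p) p U"

definition Acoef :: "nat \<Rightarrow> nat \<Rightarrow> cvec \<Rightarrow> real" where
  "Acoef p n c = fls_nth (fls_X powi (1 - int p) * fls_deriv (fL c) + Lam c p (fL c)) (int n + 1)"

definition Lpos :: "nat \<Rightarrow> (cvec \<Rightarrow> real) \<Rightarrow> cvec \<Rightarrow> real" where
  "Lpos k F c = pd k F c + (\<Sum>n. real (Suc n + 1) * c (Suc n) * pd (Suc n + k) F c)"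

definition Lzero :: "(cvec \<Rightarrow> real) \<Rightarrow> cvec \<Rightarrow> real" where
  "Lzero F c = (\<Sum>n. real (Suc n) * c (Suc n) * pd (Suc n) F c)"

definition Lneg :: "nat \<Rightarrow> (cvec \<Rightarrow> real) \<Rightarrow> cvec \<Rightarrow> real" where
  "Lneg p F c = (\<Sum>n. Acoef p (Suc n) c * pd (Suc n) F c)"

definition Lact :: "((cvec \<Rightarrow> real) \<Rightarrow> cvec \<Rightarrow> real) \<Rightarrow> int \<Rightarrow> cvec \<Rightarrow> real fls" where
  "Lact L q c = fls_X powi q * fps_to_fls (Abs_fps (\<lambda>n. L (\<lambda>c'. Gq c' q $ n) c))"

definition FinvL :: "cvec \<Rightarrow> real fls" where
  "FinvL c = fps_to_fls (finv c)"

end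

theory Submission
  imports Defs
begin

(* All five identities come from one variation formula.  Write
   g = f^{-1}, G = g/z and G_q = G^q, so that (f^{-1})^q = z^q G_q.  Differentiating
   the identity f(g(z)) = z with respect to c_n gives  d g / d c_n = - g^(n+1) g',
   hence  d G_q / d c_n = - q G_q g' g^n  (coefficientwise).  Consequently every
   first-order operator  sum_n w_n d/dc_n  acts on (f^{-1})^q by substituting g into
   the series W(z) = sum_n w_n z^n:  its result is  - q (f^{-1})^q g' W(g)  (with an
   extra factor g^k for L_k).  For L_k, L_0 and L_{-p} the series W is f' - 1,
   z f' - f and  (z^{1-p} f' + Lambda_p(f))/z  respectively, and composing with g turns
   these into expressions in g alone, which yields (1)-(5). *)

no_notation vec_nth (infixl \<open>$\<close> 90)
notation fls_nth (infixl \<open>$$\<close> 75)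


section \<open>Coefficients of powers and compositions\<close>

lemma fps_eq_X_times_shift: "(B::'a::comm_ring_1 fps) $ 0 = 0 \<Longrightarrow> B = fps_X * fps_shift 1 B"
  by (rule fps_ext) (simp add: fps_X_mult_nth)

lemma fps_power_eq_X_power: "(B::'a::comm_ring_1 fps) $ 0 = 0 \<Longrightarrow> B ^ k = fps_X ^ k * (fps_shift 1 B) ^ k"
  by (subst fps_eq_X_times_shift[of B], assumption) (simp add: power_mult_distrib)

lemma fps_power_mult_nth_below:
  assumes "(B::'a::comm_ring_1 fps) $ 0 = 0" "m < k"
  shows "(B ^ k * H) $ m = 0"
  using assms by (simp add: fps_power_eq_X_power[OF assms(1)] mult.assoc fps_X_power_mult_nth)

lemma fps_power_mult_nth_diag:
  assumes "(B::'a::comm_ring_1 fps) $ 0 = 0" "H $ 0 = 0"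
  shows "(B ^ m * H) $ m = 0"
proof -
  have "(B ^ m * H) $ m = ((fps_shift 1 B) ^ m * H) $ 0"
    by (simp add: fps_power_eq_X_power[OF assms(1)] mult.assoc fps_X_power_mult_nth)
  then show ?thesis using assms by simp
qed

lemma fps_mult_nth_cong:
  assumes "\<And>i. i \<le> m \<Longrightarrow> P $ i = Q $ i"
  shows "(P * H) $ m = (Q * H) $ m"
  unfolding fps_mult_nth using assms by (intro sum.cong) auto

lemma fps_compose_nth_truncate:
  assumes "(B::'a::field fps) $ 0 = 0" "i \<le> N"
  shows "(A oo B) $ i = (\<Sum>j=0..N. fps_const (A $ j) * B ^ j) $ i"
proof -
  have "(\<Sum>j=0..N. fps_const (A $ j) * B ^ j) $ i = (\<Sum>j=0..N. A $ j * (B ^ j) $ i)"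
    by (simp add: fps_sum_nth)
  also have "\<dots> = (\<Sum>j=0..i. A $ j * (B ^ j) $ i)"
    using assms by (intro sum.mono_neutral_right)
      (auto simp: fps_power_mult_nth_below[where H=1, simplified])
  finally show ?thesis by (simp add: fps_compose_nth)
qed

text \<open>The chain rule at the level of coefficients: the sum obtained by differentiating the
  powers B^j termwise is a coefficient of A'(B) times the variation of B.\<close>
lemma fps_compose_deriv_sum:
  fixes A B H :: "'a::field fps"
  assumes B0: "B $ 0 = 0" and H0: "H $ 0 = 0"
  shows "(\<Sum>j=0..m. A $ j * (of_nat j * B ^ (j - 1) * H) $ m) = ((fps_deriv A oo B) * H) $ m"
proof -
  have "((fps_deriv A oo B) * H) $ m = ((\<Sum>j=0..m. fps_const (fps_deriv A $ j) * B ^ j) * H) $ m"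
    using B0 by (intro fps_mult_nth_cong fps_compose_nth_truncate) auto
  also have "\<dots> = (\<Sum>j=0..m. (of_nat (Suc j) * A $ Suc j) * (B ^ j * H) $ m)"
    by (simp add: sum_distrib_right fps_sum_nth mult.assoc)
  also have "\<dots> = (\<Sum>j=0..<m. (of_nat (Suc j) * A $ Suc j) * (B ^ j * H) $ m)"
    using B0 H0 by (simp add: fps_power_mult_nth_diag atLeastLessThanSuc_atLeastAtMost[symmetric])
  also have "\<dots> = (\<Sum>j=Suc 0..<Suc m. (of_nat j * A $ j) * (B ^ (j - 1) * H) $ m)"
    by (subst sum.shift_bounds_Suc_ivl) simp
  also have "\<dots> = (\<Sum>j=0..<Suc m. (of_nat j * A $ j) * (B ^ (j - 1) * H) $ m)"
    by (subst (2) sum.atLeast_Suc_lessThan) auto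
  also have "\<dots> = (\<Sum>j=0..m. A $ j * (of_nat j * B ^ (j - 1) * H) $ m)"
    by (simp add: atLeastLessThanSuc_atLeastAtMost mult.assoc fps_mult_left_const_nth
        mult.left_commute flip: fps_of_nat)
  finally show ?thesis by simp
qed


section \<open>Coefficientwise derivatives of parametrised power series\<close>

text \<open>This is how a partial derivative in one of the variables c_n acts
  on a series whose coefficients are polynomials in the c_j.\<close>
definition has_fps_deriv :: "('a::real_normed_field \<Rightarrow> 'a fps) \<Rightarrow> 'a fps \<Rightarrow> 'a \<Rightarrow> bool" where
  "has_fps_deriv F D t \<longleftrightarrow> (\<forall>m. ((\<lambda>s. F s $ m) has_field_derivative (D $ m)) (at t))"

lemma has_fps_deriv_const: "has_fps_deriv (\<lambda>_. A) 0 t"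
  by (simp add: has_fps_deriv_def)

lemma has_fps_deriv_unique: "has_fps_deriv F D1 t \<Longrightarrow> has_fps_deriv F D2 t \<Longrightarrow> D1 = D2"
  unfolding has_fps_deriv_def by (auto intro!: fps_ext intro: DERIV_unique)

lemma has_fps_deriv_constant_family:
  "has_fps_deriv F D t \<Longrightarrow> (\<And>s. F s = A) \<Longrightarrow> D = 0"
  using has_fps_deriv_unique has_fps_deriv_const by (metis ext)

lemma has_fps_deriv_exI:
  assumes "\<And>m. \<exists>D. ((\<lambda>s. F s $ m) has_field_derivative D) (at t)"
  shows "\<exists>D. has_fps_deriv F D t"
proof -
  define D where "D = Abs_fps (\<lambda>m. SOME D. ((\<lambda>s. F s $ m) has_field_derivative D) (at t))"
  have "has_fps_deriv F D t"
    unfolding has_fps_deriv_def D_def using assms by (auto intro: someI_ex)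
  then show ?thesis ..
qed

lemma has_fps_deriv_mult:
  assumes "has_fps_deriv F DF t" "has_fps_deriv G DG t"
  shows "has_fps_deriv (\<lambda>s. F s * G s) (F t * DG + DF * G t) t"
  unfolding has_fps_deriv_def
proof
  fix m
  have "((\<lambda>s. \<Sum>i=0..m. F s $ i * G s $ (m - i)) has_field_derivative
     (\<Sum>i=0..m. F t $ i * DG $ (m - i) + DF $ i * G t $ (m - i))) (at t)"
    using assms unfolding has_fps_deriv_def by (intro DERIV_sum DERIV_mult') auto
  then show "((\<lambda>s. (F s * G s) $ m) has_field_derivative (F t * DG + DF * G t) $ m) (at t)"
    by (simp add: fps_mult_nth sum.distrib)
qed

lemma has_fps_deriv_power:
  assumes "has_fps_deriv F DF t"
  shows "has_fps_deriv (\<lambda>s. F s ^ k) (of_nat k * F t ^ (k - 1) * DF) t"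
proof (induction k)
  case 0
  then show ?case using has_fps_deriv_const[of 1 t] by simp
next
  case (Suc k)
  have "has_fps_deriv (\<lambda>s. F s * F s ^ k) (F t * (of_nat k * F t ^ (k - 1) * DF) + DF * F t ^ k) t"
    by (rule has_fps_deriv_mult[OF assms Suc])
  moreover have "F t * (of_nat k * F t ^ (k - 1) * DF) + DF * F t ^ k
      = of_nat (Suc k) * F t ^ (Suc k - 1) * DF"
    by (cases k) (simp_all add: algebra_simps)
  ultimately show ?case by simp
qed

lemma has_fps_deriv_shift: "has_fps_deriv F D t \<Longrightarrow> has_fps_deriv (\<lambda>s. fps_shift 1 (F s)) (fps_shift 1 D) t"
  unfolding has_fps_deriv_def by simp

lemma has_fps_deriv_nth0:
  assumes "has_fps_deriv B DB t" "\<And>s. B s $ 0 = 0"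
  shows "DB $ 0 = 0"
proof -
  have "((\<lambda>s. B s $ 0) has_field_derivative DB $ 0) (at t)"
    using assms(1) by (simp add: has_fps_deriv_def)
  moreover have "((\<lambda>s. B s $ 0) has_field_derivative 0) (at t)" using assms(2) by simp
  ultimately show ?thesis using DERIV_unique by blast
qed

lemma has_fps_deriv_compose:
  assumes A: "has_fps_deriv A DA t" and B: "has_fps_deriv B DB t" and B0: "\<And>s. B s $ 0 = 0"
  shows "has_fps_deriv (\<lambda>s. A s oo B s) ((DA oo B t) + (fps_deriv (A t) oo B t) * DB) t"
  unfolding has_fps_deriv_def
proof
  fix m
  have DB0: "DB $ 0 = 0" by (rule has_fps_deriv_nth0[OF B B0])
  have P: "\<And>j. has_fps_deriv (\<lambda>s. B s ^ j) (of_nat j * B t ^ (j - 1) * DB) t"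
    by (rule has_fps_deriv_power[OF B])
  have "((\<lambda>s. \<Sum>j=0..m. A s $ j * (B s ^ j) $ m) has_field_derivative
     (\<Sum>j=0..m. A t $ j * (of_nat j * B t ^ (j - 1) * DB) $ m + DA $ j * (B t ^ j) $ m)) (at t)"
    using A P unfolding has_fps_deriv_def by (intro DERIV_sum DERIV_mult') auto
  moreover have "(\<Sum>j=0..m. A t $ j * (of_nat j * B t ^ (j - 1) * DB) $ m + DA $ j * (B t ^ j) $ m)
     = ((DA oo B t) + (fps_deriv (A t) oo B t) * DB) $ m"
    unfolding sum.distrib fps_compose_deriv_sum[OF B0 DB0] by (simp add: fps_compose_nth)
  ultimately show "((\<lambda>s. (A s oo B s) $ m) has_field_derivative
      ((DA oo B t) + (fps_deriv (A t) oo B t) * DB) $ m) (at t)"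
    by (simp add: fps_compose_nth)
qed

text \<open>The coefficients of 1/F are differentiable: by their recursive definition each is a
  polynomial in coefficients of F and lower coefficients of 1/F.\<close>
lemma fps_inverse_nth_differentiable:
  assumes F: "has_fps_deriv F DF t" and F0: "\<And>s. F s $ 0 = 1"
  shows "\<exists>D. ((\<lambda>s. inverse (F s) $ m) has_field_derivative D) (at t)"
proof (induction m rule: less_induct)
  case (less m)
  show ?case
  proof (cases m)
    case 0
    then show ?thesis using F0 by (auto simp: fps_inverse_def intro!: exI[where x=0])
  next
    case (Suc n)
    from less obtain D where
      D: "\<And>i. i < m \<Longrightarrow> ((\<lambda>s. inverse (F s) $ i) has_field_derivative D i) (at t)"
      by metis
    have "((\<lambda>s. - 1 * (\<Sum>i=1..Suc n. F s $ i * inverse (F s) $ (Suc n - i))) has_field_derivative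
       (- 1 * (\<Sum>i=1..Suc n. F t $ i * D (Suc n - i) + DF $ i * inverse (F t) $ (Suc n - i)))) (at t)"
      using F D Suc unfolding has_fps_deriv_def by (intro DERIV_cmult DERIV_sum DERIV_mult') auto
    moreover have "(\<lambda>s. inverse (F s) $ m)
        = (\<lambda>s. - 1 * (\<Sum>i=1..Suc n. F s $ i * inverse (F s) $ (Suc n - i)))"
      using F0 Suc by (simp add: fps_inverse_def fun_eq_iff)
    ultimately show ?thesis by metis
  qed
qed

text \<open>Multiplicative inverse: once 1/F is known to have a derivative, it is forced by
  differentiating F * (1/F) = 1.\<close>
lemma has_fps_deriv_inverse:
  assumes F: "has_fps_deriv F DF t" and F0: "\<And>s. F s $ 0 = 1"
  shows "has_fps_deriv (\<lambda>s. inverse (F s)) (- (inverse (F t) * inverse (F t)) * DF) t"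
proof -
  obtain DI where I: "has_fps_deriv (\<lambda>s. inverse (F s)) DI t"
    using has_fps_deriv_exI[OF fps_inverse_nth_differentiable[OF F F0]] by blast
  have "F s * inverse (F s) = 1" for s using F0[of s] by (simp add: inverse_mult_eq_1')
  then have E: "F t * DI + DF * inverse (F t) = 0"
    using has_fps_deriv_constant_family[OF has_fps_deriv_mult[OF F I]] by blast
  have "DI = inverse (F t) * (F t * DI)"
    using F0[of t] by (simp add: inverse_mult_eq_1 flip: mult.assoc)
  also have "\<dots> = inverse (F t) * (- DF * inverse (F t))"
  proof -
    from E have "F t * DI = - (DF * inverse (F t))" by (simp add: eq_neg_iff_add_eq_0)
    then show ?thesis by simp
  qed
  also have "\<dots> = - (inverse (F t) * inverse (F t)) * DF"
    by (simp add: algebra_simps)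
  finally show ?thesis using I by simp
qed

text \<open>The coefficients of the reversion F^{-1} of a normalised series are differentiable,
  again by their recursive definition.\<close>
lemma fps_inv_nth_differentiable:
  assumes F: "has_fps_deriv F DF t" and F1: "\<And>s. F s $ 1 = 1"
  shows "\<exists>D. ((\<lambda>s. fps_inv (F s) $ m) has_field_derivative D) (at t)"
proof (induction m rule: less_induct)
  case (less m)
  show ?case
  proof (cases m)
    case 0
    then show ?thesis by (auto simp: fps_inv_def intro!: exI[where x=0])
  next
    case (Suc k)
    from less obtain D where
      D: "\<And>i. i < m \<Longrightarrow> ((\<lambda>s. fps_inv (F s) $ i) has_field_derivative D i) (at t)"
      by metis
    have P: "\<And>i. has_fps_deriv (\<lambda>s. F s ^ i) (of_nat i * F t ^ (i - 1) * DF) t"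
      by (rule has_fps_deriv_power[OF F])
    have "((\<lambda>s. fps_X $ Suc k - (\<Sum>i=0..k. fps_inv (F s) $ i * (F s ^ i) $ Suc k))
        has_field_derivative (0 - (\<Sum>i=0..k. fps_inv (F t) $ i * (of_nat i * F t ^ (i - 1) * DF) $ Suc k
                                   + D i * (F t ^ i) $ Suc k))) (at t)"
      using P D Suc unfolding has_fps_deriv_def
      by (intro DERIV_diff DERIV_const DERIV_sum DERIV_mult') auto
    moreover have "(\<lambda>s. fps_inv (F s) $ m)
        = (\<lambda>s. fps_X $ Suc k - (\<Sum>i=0..k. fps_inv (F s) $ i * (F s ^ i) $ Suc k))"
      using Suc F1 by (simp add: fps_inv_def fun_eq_iff)
    ultimately show ?thesis by metis
  qed
qed

text \<open>Reversion: differentiating F(F^{-1}) = X gives the derivative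
  - (DF o F^{-1}) (F^{-1})'  of the compositional inverse.\<close>
lemma has_fps_deriv_fps_inv:
  assumes F: "has_fps_deriv F DF t" and F0: "\<And>s. F s $ 0 = 0" and F1: "\<And>s. F s $ 1 = 1"
  shows "has_fps_deriv (\<lambda>s. fps_inv (F s)) (- (DF oo fps_inv (F t)) * fps_deriv (fps_inv (F t))) t"
proof -
  obtain DG where G: "has_fps_deriv (\<lambda>s. fps_inv (F s)) DG t"
    using has_fps_deriv_exI[OF fps_inv_nth_differentiable[OF F F1]] by blast
  have F1': "F s $ 1 \<noteq> 0" for s by (metis F1 one_neq_zero)
  define g where "g = fps_inv (F t)"
  have "F s oo fps_inv (F s) = fps_X" for s by (rule fps_inv_right[OF F0 F1'])
  then have E: "(DF oo g) + (fps_deriv (F t) oo g) * DG = 0"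
    using has_fps_deriv_constant_family[OF has_fps_deriv_compose[OF F G]] g_def
    by (simp add: fps_inv_def)
  have g': "fps_deriv g * (fps_deriv (F t) oo g) = 1"
    unfolding g_def fps_inv_deriv[OF F0 F1']
    by (rule inverse_mult_eq_1) (simp add: fps_inv_def F1[unfolded One_nat_def])
  have "DG = fps_deriv g * ((fps_deriv (F t) oo g) * DG)"
    using g' by (simp flip: mult.assoc)
  also have "\<dots> = - (DF oo g) * fps_deriv g"
  proof -
    from E have "(fps_deriv (F t) oo g) * DG = - (DF oo g)"
      by (simp add: eq_neg_iff_add_eq_0 add.commute)
    then show ?thesis by (simp add: mult.commute)
  qed
  finally show ?thesis using G by (simp add: g_def)
qed


section \<open>The reverse series and its variation in the c_n\<close>

lemma fser_nth: "fser c $ m = (if m = 0 then 0 else if m = 1 then 1 else c (m - 1))"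
  by (simp add: fser_def)

lemma fser_nth_0 [simp]: "fser c $ 0 = 0" and fser_nth_1 [simp]: "fser c $ Suc 0 = 1"
  by (simp_all add: fser_nth)

lemma finv_nth_0 [simp]: "finv c $ 0 = 0"
  by (simp add: finv_def fps_inv_def)

lemma finv_nth_1 [simp]: "finv c $ Suc 0 = 1"
  by (simp add: finv_def fps_inv_def)

lemma finv_nonzero [simp]: "finv c \<noteq> 0"
  using finv_nth_1[of c] by (metis fps_zero_nth zero_neq_one)

text \<open>Since f = z + sum c_n z^(n+1), the partial derivative of f in c_n is z^(n+1).\<close>
lemma has_fps_deriv_fser:
  assumes "n \<ge> 1"
  shows "has_fps_deriv (\<lambda>t. fser (c(n := t))) (fps_X ^ (n + 1)) t0"
  unfolding has_fps_deriv_def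
proof
  fix m
  show "((\<lambda>t. fser (c(n := t)) $ m) has_real_derivative (fps_X ^ (n + 1)) $ m) (at t0)"
  proof (cases "m = n + 1")
    case True
    then have "(\<lambda>t. fser (c(n := t)) $ m) = (\<lambda>t. t)" using assms by (auto simp: fser_nth)
    then show ?thesis using True by simp
  next
    case False
    then have "(\<lambda>t. fser (c(n := t)) $ m) = (\<lambda>t. fser c $ m)"
      using assms by (auto simp: fser_nth fun_eq_iff)
    moreover have "(fps_X ^ (n + 1) :: real fps) $ m = 0"
      using False by (simp only: fps_X_power_nth) simp
    ultimately show ?thesis by (simp only:) (rule DERIV_const)
  qed
qed

lemma has_fps_deriv_finv:
  assumes "n \<ge> 1"
  shows "has_fps_deriv (\<lambda>t. finv (c(n := t))) (- (finv c ^ (n + 1)) * fps_deriv (finv c)) (c n)"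
proof -
  have "has_fps_deriv (\<lambda>t. fps_inv (fser (c(n := t))))
      (- (fps_X ^ (n + 1) oo fps_inv (fser c)) * fps_deriv (fps_inv (fser c))) (c n)"
    using has_fps_deriv_fps_inv[OF has_fps_deriv_fser[OF assms], of c "c n"] by simp
  moreover have "fps_X ^ (n + 1) oo finv c = finv c ^ (n + 1)"
    by (rule fps_X_power_compose) simp
  ultimately show ?thesis by (simp add: finv_def)
qed

lemma Gser_nth_0 [simp]: "Gser c $ 0 = 1"
  by (simp add: Gser_def)

lemma finv_eq_X_times_Gser: "finv c = fps_X * Gser c"
  unfolding Gser_def by (rule fps_eq_X_times_shift) simp

lemma has_fps_deriv_Gser:
  assumes "n \<ge> 1"
  shows "has_fps_deriv (\<lambda>t. Gser (c(n := t))) (- (finv c ^ n) * Gser c * fps_deriv (finv c)) (c n)"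
proof -
  have "has_fps_deriv (\<lambda>t. Gser (c(n := t)))
      (fps_shift 1 (- (finv c ^ (n + 1)) * fps_deriv (finv c))) (c n)"
    unfolding Gser_def by (rule has_fps_deriv_shift[OF has_fps_deriv_finv[OF assms]])
  moreover have "- (finv c ^ (n + 1)) * fps_deriv (finv c)
      = (- (finv c ^ n) * Gser c * fps_deriv (finv c)) * fps_X"
  proof -
    have "finv c ^ (n + 1) = finv c ^ n * (fps_X * Gser c)"
      using finv_eq_X_times_Gser[of c, symmetric] by simp
    then show ?thesis by (simp add: algebra_simps)
  qed
  ultimately show ?thesis by (simp only: fps_shift_times_fps_X')
qed

lemma Gq_nonneg: "0 \<le> q \<Longrightarrow> Gq c q = Gser c ^ nat q"
  by (simp add: Gq_def)

lemma Gq_neg: "q < 0 \<Longrightarrow> Gq c q = inverse (Gser c ^ nat (- q))"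
  by (simp add: Gq_def)

text \<open>The variation kernel of G_q = (g/z)^q: its partial derivative in c_n is this series
  times g^n.\<close>
definition Gq_var :: "cvec \<Rightarrow> int \<Rightarrow> real fps" where
  "Gq_var c q = - fps_const (of_int q) * Gq c q * fps_deriv (finv c)"

lemma has_fps_deriv_Gq:
  assumes "n \<ge> 1"
  shows "has_fps_deriv (\<lambda>t. Gq (c(n := t)) q) (Gq_var c q * finv c ^ n) (c n)"
proof (cases "0 \<le> q")
  case True
  define k where "k = nat q"
  have "has_fps_deriv (\<lambda>t. Gser (c(n := t)) ^ k)
      (of_nat k * Gser c ^ (k - 1) * (- (finv c ^ n) * Gser c * fps_deriv (finv c))) (c n)"
    using has_fps_deriv_power[OF has_fps_deriv_Gser[OF assms], where k=k] by simp
  moreover have "of_nat k * Gser c ^ (k - 1) * (- (finv c ^ n) * Gser c * fps_deriv (finv c))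
      = Gq_var c q * finv c ^ n"
  proof (cases k)
    case 0
    then show ?thesis using True k_def by (simp add: Gq_var_def Gq_nonneg)
  next
    case (Suc j)
    have q: "fps_const (of_int q) = (of_nat k :: real fps)"
      using True k_def by (simp flip: fps_of_nat)
    have "Gq c q = Gser c ^ (k - 1) * Gser c" using Suc True k_def by (simp add: Gq_nonneg)
    then show ?thesis unfolding Gq_var_def q by (simp add: mult_ac)
  qed
  ultimately show ?thesis using True k_def by (simp add: Gq_nonneg)
next
  case False
  define k where "k = nat (- q)"
  have k1: "k \<ge> 1" using False k_def by simp
  have "has_fps_deriv (\<lambda>t. inverse (Gser (c(n := t)) ^ k))
     (- (inverse (Gser c ^ k) * inverse (Gser c ^ k)) *
      (of_nat k * Gser c ^ (k - 1) * (- (finv c ^ n) * Gser c * fps_deriv (finv c)))) (c n)"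
    using has_fps_deriv_inverse[OF has_fps_deriv_power[OF has_fps_deriv_Gser[OF assms]]]
    by (simp add: fps_nth_power_0)
  moreover have "- (inverse (Gser c ^ k) * inverse (Gser c ^ k)) *
      (of_nat k * Gser c ^ (k - 1) * (- (finv c ^ n) * Gser c * fps_deriv (finv c)))
      = Gq_var c q * finv c ^ n"
  proof -
    have "Gser c ^ (k - 1) * Gser c = Gser c ^ k" using k1 by (cases k) auto
    moreover have "inverse (Gser c ^ k) * Gser c ^ k = 1" by (simp add: inverse_mult_eq_1)
    moreover have "- fps_const (of_int q) = (of_nat k :: real fps)"
      using False k_def by (simp flip: fps_of_nat fps_const_neg)
    ultimately show ?thesis using False k_def
      by (simp add: Gq_var_def Gq_neg algebra_simps)
        (metis (no_types, lifting) mult.assoc mult.left_commute mult_1_right)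
  qed
  ultimately show ?thesis using False k_def by (simp add: Gq_neg)
qed

lemma pd_Gq_nth:
  assumes "n \<ge> 1"
  shows "pd n (\<lambda>c'. Gq c' q $ m) c = (Gq_var c q * finv c ^ n) $ m"
  unfolding pd_def
  using has_fps_deriv_Gq[OF assms, of c q] unfolding has_fps_deriv_def
  by (intro DERIV_imp_deriv) blast



section \<open>First-order operators act by composition with the reverse series\<close>

definition fps_of_coeffs :: "(nat \<Rightarrow> real) \<Rightarrow> real fps" where
  "fps_of_coeffs w = Abs_fps (\<lambda>j. if j = 0 then 0 else w j)"

lemma operator_sum_Gq_nth:
  "(\<Sum>j. w (Suc j) * pd (Suc j + s) (\<lambda>c'. Gq c' q $ m) c)
     = (Gq_var c q * finv c ^ s * (fps_of_coeffs w oo finv c)) $ m"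
proof -
  define B where "B = Gq_var c q * finv c ^ s"
  define g where "g = finv c"
  have g0: "g $ 0 = 0" by (simp add: g_def)
  have summand: "w (Suc j) * pd (Suc j + s) (\<lambda>c'. Gq c' q $ m) c = w (Suc j) * (g ^ Suc j * B) $ m" for j
    by (simp add: pd_Gq_nth B_def g_def power_add mult_ac)
  have "(\<Sum>j. w (Suc j) * pd (Suc j + s) (\<lambda>c'. Gq c' q $ m) c)
      = (\<Sum>j<m. w (Suc j) * (g ^ Suc j * B) $ m)"
    unfolding summand
    by (rule suminf_finite) (auto simp: fps_power_mult_nth_below[OF g0] simp del: power_Suc)
  also have "\<dots> = (\<Sum>j=Suc 0..<Suc m. w j * (g ^ j * B) $ m)"
    by (subst sum.shift_bounds_Suc_ivl) (simp add: lessThan_atLeast0)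
  also have "\<dots> = (\<Sum>j=0..<Suc m. fps_of_coeffs w $ j * (g ^ j * B) $ m)"
    by (subst (2) sum.atLeast_Suc_lessThan) (auto simp: fps_of_coeffs_def)
  also have "\<dots> = ((\<Sum>j=0..m. fps_const (fps_of_coeffs w $ j) * g ^ j) * B) $ m"
    by (simp add: atLeastLessThanSuc_atLeastAtMost sum_distrib_right fps_sum_nth mult.assoc)
  also have "\<dots> = ((fps_of_coeffs w oo g) * B) $ m"
    using g0 by (intro fps_mult_nth_cong) (simp add: fps_compose_nth_truncate)
  finally show ?thesis by (simp add: B_def g_def mult_ac)
qed

lemma Lact_by_coeffs:
  assumes "\<And>m. L (\<lambda>c'. Gq c' q $ m) c = P $ m"
  shows "Lact L q c = fls_X powi q * fps_to_fls P"
proof -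
  have "Abs_fps (\<lambda>m. L (\<lambda>c'. Gq c' q $ m) c) = P" by (rule fps_ext) (simp add: assms)
  then show ?thesis unfolding Lact_def by simp
qed

lemma FinvL_eq: "FinvL c = fls_X * fps_to_fls (Gser c)"
  unfolding FinvL_def by (subst finv_eq_X_times_Gser) (simp add: fls_times_fps_to_fls)

lemma FinvL_nonzero [simp]: "FinvL c \<noteq> 0"
  by (simp add: FinvL_def)

lemma FinvL_powi: "fls_X powi q * fps_to_fls (Gq c q) = FinvL c powi q"
proof (cases "0 \<le> q")
  case True
  then show ?thesis
    by (simp add: FinvL_eq power_int_mult_distrib Gq_nonneg power_int_nonneg_exp fps_to_fls_power
        del: fls_X_power_int)
next
  case False
  have s0: "subdegree (Gser c ^ nat (- q)) = 0" by (simp add: subdegree_eq_0_iff fps_nth_power_0)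
  have "fps_to_fls (Gser c) powi q = inverse (fps_to_fls (Gser c) ^ nat (- q))"
    using False by (simp add: power_int_def power_inverse)
  also have "\<dots> = fps_to_fls (Gq c q)"
    using False s0 by (simp add: Gq_neg fps_to_fls_power fls_inverse_fps_to_fls flip: fps_to_fls_power)
  finally show ?thesis by (simp add: FinvL_eq power_int_mult_distrib del: fls_X_power_int)
qed

lemma FinvL_deriv: "fls_deriv (FinvL c) = fps_to_fls (fps_deriv (finv c))"
  by (simp add: FinvL_def fls_deriv_fps_to_fls)

lemma finv_deriv_eq: "fps_deriv (finv c) = inverse (fps_deriv (fser c) oo finv c)"
  unfolding finv_def by (rule fps_inv_deriv) simp_all

lemma finv_deriv_times: "fps_deriv (finv c) * (fps_deriv (fser c) oo finv c) = 1"
  unfolding finv_deriv_eq by (rule inverse_mult_eq_1) simp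

text \<open>The operators L_k: since  1 + sum (n+1) c_n z^n = f',  L_k acts on (f^{-1})^q as
  multiplication by  - q (f^{-1})^k.\<close>
lemma Lact_Lpos:
  assumes "k \<ge> 1"
  shows "Lact (Lpos k) q c = - fls_const (of_int q) * FinvL c powi q * FinvL c ^ k"
proof -
  define w where "w = (\<lambda>j. real (j + 1) * c j)"
  define g where "g = finv c"
  have W: "1 + (fps_of_coeffs w oo g) = fps_deriv (fser c) oo g"
  proof -
    have "fps_of_coeffs w = fps_deriv (fser c) - 1"
      by (rule fps_ext) (auto simp: fps_of_coeffs_def w_def fser_nth)
    then show ?thesis by (simp add: fps_compose_sub_distrib)
  qed
  have "Lact (Lpos k) q c = fls_X powi q * fps_to_fls (Gq_var c q * g ^ k * (fps_deriv (fser c) oo g))"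
  proof (rule Lact_by_coeffs)
    fix m
    have "(Gq_var c q * g ^ k) $ m + (Gq_var c q * g ^ k * (fps_of_coeffs w oo g)) $ m
        = (Gq_var c q * g ^ k * (fps_deriv (fser c) oo g)) $ m"
      unfolding W[symmetric] by (simp only: distrib_left mult_1_right fps_add_nth)
    then show "Lpos k (\<lambda>c'. Gq c' q $ m) c = (Gq_var c q * g ^ k * (fps_deriv (fser c) oo g)) $ m"
      using operator_sum_Gq_nth[of w k q m c]
      unfolding Lpos_def pd_Gq_nth[OF assms] w_def g_def by simp
  qed
  also have "Gq_var c q * g ^ k * (fps_deriv (fser c) oo g) = - fps_const (of_int q) * Gq c q * g ^ k"
    using finv_deriv_times[of c] unfolding Gq_var_def g_def by (simp add: mult_ac)
  finally have "Lact (Lpos k) q c = - fls_const (of_int q) * (fls_X powi q * fps_to_fls (Gq c q)) * FinvL c ^ k"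
    by (simp add: fls_times_fps_to_fls fps_to_fls_power FinvL_def g_def mult_ac del: fls_X_power_int)
  then show ?thesis by (simp only: FinvL_powi)
qed

lemma Lact_first_order:
  assumes "\<And>F. L F c = (\<Sum>n. w (Suc n) * pd (Suc n) F c)"
  shows "Lact L q c = - fls_const (of_int q) * FinvL c powi q * fls_deriv (FinvL c)
                      * fps_to_fls (fps_of_coeffs w oo finv c)"
proof -
  have "Lact L q c = fls_X powi q * fps_to_fls (Gq_var c q * finv c ^ 0 * (fps_of_coeffs w oo finv c))"
    by (rule Lact_by_coeffs) (simp add: assms operator_sum_Gq_nth[of w 0, simplified])
  also have "\<dots> = - fls_const (of_int q) * (fls_X powi q * fps_to_fls (Gq c q)) * fls_deriv (FinvL c)
                   * fps_to_fls (fps_of_coeffs w oo finv c)"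
    by (simp add: Gq_var_def FinvL_deriv fls_times_fps_to_fls mult_ac del: fls_X_power_int)
  finally show ?thesis by (simp only: FinvL_powi)
qed

lemma FinvL_times_compose:
  "FinvL c * fps_to_fls (W oo finv c) = fls_compose_fps (fls_X * fps_to_fls W) (finv c)"
  by (simp add: fls_compose_fps_mult FinvL_def)



section \<open>Moving between the f-side and the g-side by composition\<close>

lemma fser_nonzero [simp]: "fser c \<noteq> 0"
  using fser_nth_1[of c] by (metis fps_zero_nth zero_neq_one)

lemma fL_deriv: "fls_deriv (fL c) = fps_to_fls (fps_deriv (fser c))"
  by (simp add: fL_def fls_deriv_fps_to_fls)

lemma FinvL_deriv_nonzero [simp]: "fls_deriv (FinvL c) \<noteq> 0"
proof -
  have "fps_deriv (finv c) $ 0 = 1" by simp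
  then have "fps_deriv (finv c) \<noteq> 0" by (metis fps_zero_nth zero_neq_one)
  then show ?thesis by (simp add: FinvL_deriv)
qed

lemma inverse_FinvL_deriv: "inverse (fls_deriv (FinvL c)) = fps_to_fls (inverse (fps_deriv (finv c)))"
proof -
  have "subdegree (fps_deriv (finv c)) = 0" by (simp add: subdegree_eq_0_iff)
  then show ?thesis by (simp add: FinvL_deriv fls_inverse_fps_to_fls)
qed

lemma compose_fL_finv: "fls_compose_fps (fL c) (finv c) = fls_X"
  using finv_nonzero[of c] finv_nth_0[of c] unfolding fL_def finv_def by (simp add: fps_inv_right)

lemma compose_FinvL_fser: "fls_compose_fps (FinvL c) (fser c) = fls_X"
  unfolding FinvL_def by (simp add: finv_def fps_inv)

lemma compose_fL_deriv_finv:
  "fls_compose_fps (fls_deriv (fL c)) (finv c) = inverse (fls_deriv (FinvL c))"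
proof -
  have "subdegree (fps_deriv (fser c) oo finv c) = 0" by (simp add: subdegree_eq_0_iff)
  then show ?thesis
    unfolding fL_deriv FinvL_deriv finv_deriv_eq by (simp add: fls_inverse_fps_to_fls[symmetric])
qed

lemma compose_FinvL_deriv_fser:
  "fls_compose_fps (fls_deriv (FinvL c)) (fser c) = inverse (fls_deriv (fL c))"
proof -
  have "fps_deriv (finv c) oo fser c = inverse ((fps_deriv (fser c) oo finv c) oo fser c)"
    unfolding finv_deriv_eq by (rule fps_inverse_compose) simp_all
  also have "(fps_deriv (fser c) oo finv c) oo fser c = fps_deriv (fser c) oo (finv c oo fser c)"
    by (rule fps_compose_assoc[symmetric]) simp_all
  also have "finv c oo fser c = fps_X" unfolding finv_def by (rule fps_inv) simp_all
  finally have "fps_deriv (finv c) oo fser c = inverse (fps_deriv (fser c))" by simp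
  moreover have "subdegree (fps_deriv (fser c)) = 0" by (simp add: subdegree_eq_0_iff)
  ultimately show ?thesis
    unfolding fL_deriv FinvL_deriv by (simp add: fls_inverse_fps_to_fls)
qed

lemma fls_compose_fps_sum:
  assumes "h \<noteq> 0" "h $ 0 = 0"
  shows "fls_compose_fps (\<Sum>i\<in>A. F i) h = (\<Sum>i\<in>A. fls_compose_fps (F i) h)"
proof (induction A rule: infinite_finite_induct)
  case (insert x F)
  then show ?case using assms by (simp add: fls_compose_fps_add)
qed simp_all

text \<open>Lambda_p is a Laurent polynomial in its argument, so it commutes with substitution.\<close>
lemma LamE_compose:
  assumes "h \<noteq> 0" "h $ 0 = 0"
  shows "fls_compose_fps (LamE \<beta> p U) h = LamE \<beta> p (fls_compose_fps U h)"
  unfolding LamE_def using assms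
  by (simp add: fls_compose_fps_add fls_compose_fps_diff fls_compose_fps_sum
      fls_compose_fps_mult fls_compose_fps_powi)


text \<open>Here W = (z f' - f)/z, and  g W(g) = g f'(g) - z  gives the action on (f^{-1})^q.\<close>
lemma Lact_Lzero:
  "FinvL c * Lact Lzero q c
     = - fls_const (of_int q) * FinvL c powi q * (FinvL c - fls_X * fls_deriv (FinvL c))"
proof -
  define w where "w = (\<lambda>j. real j * c j)"
  have XW: "fls_X * fps_to_fls (fps_of_coeffs w) = fls_X * fls_deriv (fL c) - fL c"
  proof -
    have "fps_X * fps_of_coeffs w = fps_X * fps_deriv (fser c) - fser c"
      by (rule fps_ext) (auto simp: fps_of_coeffs_def w_def fser_nth fps_X_mult_nth algebra_simps)
    then have "fps_to_fls (fps_X * fps_of_coeffs w) = fps_to_fls (fps_X * fps_deriv (fser c) - fser c)"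
      by (rule arg_cong)
    then show ?thesis by (simp add: fL_def fls_deriv_fps_to_fls fls_times_fps_to_fls)
  qed
  have GW: "FinvL c * fps_to_fls (fps_of_coeffs w oo finv c)
      = FinvL c * inverse (fls_deriv (FinvL c)) - fls_X"
    unfolding FinvL_times_compose XW
    by (simp add: fls_compose_fps_diff fls_compose_fps_mult compose_fL_deriv_finv compose_fL_finv
        FinvL_def)
  have "Lact Lzero q c = - fls_const (of_int q) * FinvL c powi q * fls_deriv (FinvL c)
                      * fps_to_fls (fps_of_coeffs w oo finv c)"
    by (rule Lact_first_order) (simp add: Lzero_def w_def)
  then have "FinvL c * Lact Lzero q c = - fls_const (of_int q) * FinvL c powi q * fls_deriv (FinvL c)
                      * (FinvL c * fps_to_fls (fps_of_coeffs w oo finv c))"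
    by (simp add: mult_ac)
  also have "\<dots> = - fls_const (of_int q) * FinvL c powi q * (FinvL c - fls_X * fls_deriv (FinvL c))"
    unfolding GW by (simp add: field_simps del: fls_X_power_int)
  finally show ?thesis .
qed



definition order_at_least :: "nat \<Rightarrow> 'a::zero fls \<Rightarrow> bool" where
  "order_at_least N R \<longleftrightarrow> (\<forall>n < int N. R $$ n = 0)"

lemma order_at_least_iff:
  fixes R :: "'a::comm_ring_1 fls"
  shows "order_at_least N R \<longleftrightarrow> (\<exists>E. R = fls_X ^ N * fps_to_fls E)"
proof
  assume "order_at_least N R"
  then have "R = fls_X ^ N * fps_to_fls (fls_regpart (fls_shift (int N) R))"
    unfolding order_at_least_def by (intro fls_eqI) (auto simp: fls_X_power_times_conv_shift)
  then show "\<exists>E. R = fls_X ^ N * fps_to_fls E" ..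
next
  assume "\<exists>E. R = fls_X ^ N * fps_to_fls E"
  then show "order_at_least N R"
    unfolding order_at_least_def by (auto simp: fls_X_power_times_conv_shift)
qed

lemma order_at_least_diff: "order_at_least N A \<Longrightarrow> order_at_least N B \<Longrightarrow> order_at_least N (A - B)"
  unfolding order_at_least_def by simp

lemma order_at_least_mult_fps:
  fixes R :: "'a::comm_ring_1 fls"
  assumes "order_at_least N R"
  shows "order_at_least N (fps_to_fls A * R)"
proof -
  obtain E where "R = fls_X ^ N * fps_to_fls E" using assms order_at_least_iff by blast
  then have "fps_to_fls A * R = fls_X ^ N * fps_to_fls (A * E)"
    by (simp add: fls_times_fps_to_fls mult_ac)
  then show ?thesis using order_at_least_iff by blast
qed

lemma order_at_least_compose:
  fixes R :: "'a::field fls"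
  assumes R: "order_at_least N R" and h0: "h $ 0 = 0" and hnz: "h \<noteq> 0"
  shows "order_at_least N (fls_compose_fps R h)"
proof -
  obtain E where E: "R = fls_X ^ N * fps_to_fls E" using R order_at_least_iff by blast
  have C: "fls_compose_fps R h = fps_to_fls (h ^ N * (E oo h))"
    unfolding E using h0 hnz
    by (simp add: fls_compose_fps_mult fls_compose_fps_power fls_times_fps_to_fls fps_to_fls_power)
  show ?thesis
    unfolding order_at_least_def C
    using fps_power_mult_nth_below[OF h0] by (auto simp: not_less)
qed


section \<open>Existence and uniqueness of Lambda_p\<close>

text \<open>The g-side expression  g^{1-p} + Lambda(z) g'  for a candidate Lambda with
  coefficients beta; it corresponds to the f-side expression Lexpr under substitution.\<close>
definition Lexpr_inv :: "(nat \<Rightarrow> real) \<Rightarrow> nat \<Rightarrow> cvec \<Rightarrow> real fls" where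
  "Lexpr_inv \<beta> p c = FinvL c powi (1 - int p) + LamE \<beta> p fls_X * fls_deriv (FinvL c)"

lemma compose_Lexpr_finv:
  "fls_compose_fps (Lexpr c \<beta> p) (finv c)
     = FinvL c powi (1 - int p) * inverse (fls_deriv (FinvL c)) + LamE \<beta> p fls_X"
  unfolding Lexpr_def
  by (simp add: fls_compose_fps_add fls_compose_fps_mult fls_compose_fps_powi LamE_compose
      compose_fL_finv compose_fL_deriv_finv FinvL_def del: fls_X_power_int)

lemma Lexpr_inv_eq_compose:
  "Lexpr_inv \<beta> p c = fls_deriv (FinvL c) * fls_compose_fps (Lexpr c \<beta> p) (finv c)"
  unfolding compose_Lexpr_finv Lexpr_inv_def by (simp add: field_simps del: fls_X_power_int)

lemma Lexpr_eq_compose: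
  "Lexpr c \<beta> p = fls_deriv (fL c) * fls_compose_fps (Lexpr_inv \<beta> p c) (fser c)"
proof -
  have "fls_compose_fps (Lexpr_inv \<beta> p c) (fser c)
      = fls_X powi (1 - int p) + LamE \<beta> p (fL c) * inverse (fls_deriv (fL c))"
    unfolding Lexpr_inv_def
    by (simp add: fls_compose_fps_add fls_compose_fps_mult fls_compose_fps_powi LamE_compose
        compose_FinvL_fser compose_FinvL_deriv_fser fL_def del: fls_X_power_int)
  moreover have "fls_deriv (fL c) \<noteq> 0"
  proof -
    have "fps_deriv (fser c) $ 0 = 1" by simp
    then have "fps_deriv (fser c) \<noteq> 0" by (metis fps_zero_nth zero_neq_one)
    then show ?thesis by (simp add: fL_deriv)
  qed
  ultimately show ?thesis unfolding Lexpr_def by (simp add: field_simps del: fls_X_power_int)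
qed

lemma order2_Lexpr_iff: "order_at_least 2 (Lexpr c \<beta> p) \<longleftrightarrow> order_at_least 2 (Lexpr_inv \<beta> p c)"
proof
  assume "order_at_least 2 (Lexpr c \<beta> p)"
  then show "order_at_least 2 (Lexpr_inv \<beta> p c)"
    unfolding Lexpr_inv_eq_compose FinvL_deriv by (intro order_at_least_mult_fps order_at_least_compose) simp_all
next
  assume "order_at_least 2 (Lexpr_inv \<beta> p c)"
  then show "order_at_least 2 (Lexpr c \<beta> p)"
    unfolding Lexpr_eq_compose fL_deriv by (intro order_at_least_mult_fps order_at_least_compose) simp_all
qed

lemma LamE_X_nth:
  "LamE \<beta> p fls_X $$ n = - (if n = 1 - int p then 1 else 0) + (\<Sum>j<p. if n = 1 - int j then \<beta> j else 0)"
  unfolding LamE_def by (auto simp: fls_nth_sum intro!: sum.cong)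

lemma LamE_X_nth_coeff:
  assumes "j0 < p"
  shows "LamE \<beta> p fls_X $$ (1 - int j0) = \<beta> j0"
proof -
  have "(\<Sum>j<p. if 1 - int j0 = 1 - int j then \<beta> j else 0) = (\<Sum>j<p. if j0 = j then \<beta> j else 0)"
    by (intro sum.cong) auto
  also have "\<dots> = \<beta> j0" using assms by simp
  finally show ?thesis using assms by (simp add: LamE_X_nth)
qed

text \<open>Uniqueness: two normalised candidates differ by a Laurent polynomial supported in
  degrees 2-p .. 1 which, multiplied by the unit g', is O(z^2); hence it vanishes.\<close>
lemma Lexpr_inv_unique:
  assumes z1: "\<forall>j\<ge>p. \<beta>1 j = 0" and z2: "\<forall>j\<ge>p. \<beta>2 j = 0"
    and r1: "order_at_least 2 (Lexpr_inv \<beta>1 p c)" and r2: "order_at_least 2 (Lexpr_inv \<beta>2 p c)"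
  shows "\<beta>1 = \<beta>2"
proof -
  define D where "D = LamE \<beta>1 p fls_X - LamE \<beta>2 p fls_X"
  have "Lexpr_inv \<beta>1 p c - Lexpr_inv \<beta>2 p c = D * fls_deriv (FinvL c)"
    unfolding Lexpr_inv_def D_def by (simp add: algebra_simps)
  then have "order_at_least 2 (fps_to_fls (inverse (fps_deriv (finv c))) * (D * fls_deriv (FinvL c)))"
    using order_at_least_diff[OF r1 r2] by (simp add: order_at_least_mult_fps)
  moreover have "inverse (fls_deriv (FinvL c)) * (D * fls_deriv (FinvL c)) = D" by simp
  ultimately have D2: "order_at_least 2 D" by (simp flip: inverse_FinvL_deriv)
  show ?thesis
  proof
    fix j
    show "\<beta>1 j = \<beta>2 j"
    proof (cases "j < p")
      case True
      have "D $$ (1 - int j) = 0" using D2 unfolding order_at_least_def by simp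
      then show ?thesis using True by (simp add: D_def LamE_X_nth_coeff)
    next
      case False
      then show ?thesis using z1 z2 by simp
    qed
  qed
qed

text \<open>Existence: Lambda_p(z) must agree with  T = - g^{1-p} / g'  up to O(z^2), and T has
  a pole of order exactly p-1 with leading coefficient -1.  Hence the coefficients of the
  principal part of T give the normalised Lambda_p.\<close>
definition Lam_target :: "cvec \<Rightarrow> nat \<Rightarrow> real fls" where
  "Lam_target c p = - (FinvL c powi (1 - int p)) * inverse (fls_deriv (FinvL c))"

definition Lam_coeffs :: "cvec \<Rightarrow> nat \<Rightarrow> nat \<Rightarrow> real" where
  "Lam_coeffs c p j = (if j < p then Lam_target c p $$ (1 - int j) else 0)"

lemma Lam_target_shift:
  assumes "p \<ge> 1"
  shows "Lam_target c p = fls_shift (int p - 1)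
           (fps_to_fls (- (inverse (Gser c) ^ (p - 1)) * inverse (fps_deriv (finv c))))"
proof -
  have "subdegree (Gser c) = 0" by (simp add: subdegree_eq_0_iff)
  then have "fps_to_fls (Gser c) powi (1 - int p) = fps_to_fls (inverse (Gser c) ^ (p - 1))"
    using assms by (simp add: power_int_def nat_diff_distrib fls_inverse_fps_to_fls fps_to_fls_power)
  then have "FinvL c powi (1 - int p) = fls_shift (int p - 1) (fps_to_fls (inverse (Gser c) ^ (p - 1)))"
    unfolding FinvL_eq power_int_mult_distrib by (simp add: fls_shifted_times_simps)
  then show ?thesis
    unfolding Lam_target_def inverse_FinvL_deriv
    by (simp add: fls_shifted_times_simps fls_times_fps_to_fls)
qed

lemma Lam_target_nth:
  assumes "p \<ge> 1"
  shows "n < 1 - int p \<Longrightarrow> Lam_target c p $$ n = 0"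
    and "Lam_target c p $$ (1 - int p) = - 1"
  using assms by (simp_all add: Lam_target_shift algebra_simps fps_nth_power_0)

lemma Lam_coeffs_normalised:
  assumes "p \<ge> 1"
  shows "order_at_least 2 (Lexpr_inv (Lam_coeffs c p) p c)"
proof -
  have D: "order_at_least 2 (LamE (Lam_coeffs c p) p fls_X - Lam_target c p)"
    unfolding order_at_least_def of_nat_numeral
  proof (intro allI impI)
    fix n :: int assume n2: "n < 2"
    consider "n \<le> 1 - int p" | "1 - int p < n" by linarith
    then show "(LamE (Lam_coeffs c p) p fls_X - Lam_target c p) $$ n = 0"
    proof cases
      case 1
      have "(\<Sum>j<p. if n = 1 - int j then Lam_coeffs c p j else 0) = 0"
        using 1 by (intro sum.neutral) auto
      then show ?thesis using 1 Lam_target_nth[OF assms] by (auto simp: LamE_X_nth)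
    next
      case 2
      define j where "j = nat (1 - n)"
      have "j < p" "n = 1 - int j" using 2 n2 unfolding j_def by auto
      then show ?thesis by (simp add: LamE_X_nth_coeff Lam_coeffs_def)
    qed
  qed
  have "Lexpr_inv (Lam_coeffs c p) p c
      = fps_to_fls (fps_deriv (finv c)) * (LamE (Lam_coeffs c p) p fls_X - Lam_target c p)"
    unfolding Lexpr_inv_def Lam_target_def FinvL_deriv[symmetric]
    by (simp add: field_simps del: fls_X_power_int)
  then show ?thesis using order_at_least_mult_fps[OF D] by simp
qed

lemma alpha_eqI:
  assumes "\<forall>j\<ge>p. \<beta> j = 0" "order_at_least 2 (Lexpr c \<beta> p)"
  shows "alpha c p = \<beta>"
  unfolding alpha_def
proof (rule the_equality)
  show "(\<forall>j\<ge>p. \<beta> j = 0) \<and> (\<forall>n<2. Lexpr c \<beta> p $$ n = 0)"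
    using assms by (simp add: order_at_least_def)
next
  fix \<alpha> assume "(\<forall>j\<ge>p. \<alpha> j = 0) \<and> (\<forall>n<2. Lexpr c \<alpha> p $$ n = 0)"
  then show "\<alpha> = \<beta>"
    using Lexpr_inv_unique assms order2_Lexpr_iff by (simp add: order_at_least_def) blast
qed

lemma alpha_eq_Lam_coeffs: "p \<ge> 1 \<Longrightarrow> alpha c p = Lam_coeffs c p"
  by (intro alpha_eqI) (simp_all add: Lam_coeffs_def order2_Lexpr_iff Lam_coeffs_normalised)

lemma Lam_normalised:
  assumes "p \<ge> 1"
  shows "\<forall>j\<ge>p. alpha c p j = 0"
    and "order_at_least 2 (Lexpr c (alpha c p) p)"
    and "order_at_least 2 (Lexpr_inv (alpha c p) p c)"
  using assms by (simp_all add: alpha_eq_Lam_coeffs Lam_coeffs_def order2_Lexpr_iff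
      Lam_coeffs_normalised)



section \<open>The operators L_{-p}\<close>

text \<open>Here W = (z^{1-p} f' + Lambda_p(f))/z, which is a power series because Lambda_p is
  normalised; substituting g turns z W(z) into  g^{1-p}/g' + Lambda_p(z).\<close>
lemma Lact_Lneg:
  assumes p: "p \<ge> 1"
  shows "FinvL c * Lact (Lneg p) q c = - fls_const (of_int q) * FinvL c powi q *
           (FinvL c powi (1 - int p) + fls_deriv (FinvL c) * Lam c p fls_X)"
proof -
  define w where "w = (\<lambda>j. Acoef p j c)"
  have XW: "fls_X * fps_to_fls (fps_of_coeffs w) = Lexpr c (alpha c p) p"
  proof (rule fls_eqI)
    fix n :: int
    have low: "\<And>n. n < 2 \<Longrightarrow> Lexpr c (alpha c p) p $$ n = 0"
      using Lam_normalised(2)[OF p] unfolding order_at_least_def by simp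
    consider "n < 1" | "n = 1" | "n \<ge> 2" by linarith
    then show "(fls_X * fps_to_fls (fps_of_coeffs w)) $$ n = Lexpr c (alpha c p) p $$ n"
    proof cases
      case 1 then show ?thesis using low[of n] by (simp add: fls_X_times_conv_shift)
    next
      case 2 then show ?thesis using low[of 1] by (simp add: fls_X_times_conv_shift fps_of_coeffs_def)
    next
      case 3
      then have "nat (n - 1) \<noteq> 0" "int (nat (n - 1)) + 1 = n" by auto
      then show ?thesis using 3
        by (simp add: fls_X_times_conv_shift fps_of_coeffs_def w_def Acoef_def Lexpr_def Lam_def)
    qed
  qed
  have GW: "FinvL c * fps_to_fls (fps_of_coeffs w oo finv c)
      = FinvL c powi (1 - int p) * inverse (fls_deriv (FinvL c)) + Lam c p fls_X"
    unfolding FinvL_times_compose XW compose_Lexpr_finv Lam_def ..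
  have "Lact (Lneg p) q c = - fls_const (of_int q) * FinvL c powi q * fls_deriv (FinvL c)
                      * fps_to_fls (fps_of_coeffs w oo finv c)"
    by (rule Lact_first_order) (simp add: Lneg_def w_def)
  then have "FinvL c * Lact (Lneg p) q c = - fls_const (of_int q) * FinvL c powi q * fls_deriv (FinvL c)
                      * (FinvL c * fps_to_fls (fps_of_coeffs w oo finv c))"
    by (simp add: mult_ac)
  also have "\<dots> = - fls_const (of_int q) * FinvL c powi q *
           (FinvL c powi (1 - int p) + fls_deriv (FinvL c) * Lam c p fls_X)"
    unfolding GW by (simp add: field_simps del: fls_X_power_int)
  finally show ?thesis .
qed

lemma Lam_1: "Lam c 1 fls_X = - 1 - fls_const (2 * c 1) * fls_X"
proof -
  define \<beta> :: "nat \<Rightarrow> real" where "\<beta> = (\<lambda>j. if j = 0 then - 2 * c 1 else 0)"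
  have "Lexpr c \<beta> 1 = fps_to_fls (fps_deriv (fser c)) - 1 + fls_const (- 2 * c 1) * fps_to_fls (fser c)"
    unfolding Lexpr_def LamE_def \<beta>_def by (simp add: fL_def fls_deriv_fps_to_fls)
  moreover have "n < 2 \<Longrightarrow> (fps_to_fls (fps_deriv (fser c)) - 1
                   + fls_const (- 2 * c 1) * fps_to_fls (fser c)) $$ n = 0" for n
    by (cases "n < 0 \<or> n = 0 \<or> n = 1") (auto simp: fser_nth)
  ultimately have "alpha c 1 = \<beta>"
    by (intro alpha_eqI) (auto simp: \<beta>_def order_at_least_def)
  then show ?thesis unfolding Lam_def LamE_def \<beta>_def by simp
qed


text \<open>Specialisations of the general actions to (f^{-1})^1 and (f^{-1})^p; the factor
  f^{-1} multiplying the action is cancelled since it is nonzero.\<close>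

lemma Lact_Lzero_finv: "Lact Lzero 1 c = - FinvL c + fls_X * fls_deriv (FinvL c)"
proof -
  have "FinvL c * Lact Lzero 1 c = FinvL c * (- FinvL c + fls_X * fls_deriv (FinvL c))"
    using Lact_Lzero[of c 1] by (simp add: algebra_simps)
  then show ?thesis by simp
qed

lemma Lact_Lneg_finv:
  assumes "p \<ge> 1"
  shows "Lact (Lneg p) 1 c = - (FinvL c powi (1 - int p)) - Lam c p fls_X * fls_deriv (FinvL c)"
proof -
  have "FinvL c * Lact (Lneg p) 1 c
      = FinvL c * (- (FinvL c powi (1 - int p)) - Lam c p fls_X * fls_deriv (FinvL c))"
    using Lact_Lneg[OF assms, of c 1] by (simp add: algebra_simps del: fls_X_power_int)
  then show ?thesis by simp
qed

lemma Lact_Lneg_finv_power: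
  assumes p: "p \<ge> 1"
  shows "Lact (Lneg p) (int p) c = - of_nat p - Lam c p fls_X * fls_deriv (FinvL c ^ p)"
proof -
  define G where "G = FinvL c"
  have G: "G \<noteq> 0" by (simp add: G_def)
  have "G ^ p * G powi (1 - int p) = G"
    using power_int_add[of G "int p" "1 - int p"] G by simp
  moreover have "G ^ p = G * G ^ (p - 1)" using p by (cases p) auto
  moreover have "G * Lact (Lneg p) (int p) c
      = - of_nat p * G ^ p * (G powi (1 - int p) + fls_deriv G * Lam c p fls_X)"
    using Lact_Lneg[OF p, of c "int p"] unfolding G_def by (simp add: fls_of_nat del: fls_X_power_int)
  ultimately have "G * Lact (Lneg p) (int p) c
      = G * (- of_nat p - Lam c p fls_X * (of_nat p * G ^ (p - 1) * fls_deriv G))"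
    by (simp add: algebra_simps del: fls_X_power_int) (metis mult.assoc mult.left_commute)
  then show ?thesis using G unfolding G_def by (simp add: fls_deriv_power)
qed

lemma Lam_characterisation:
  assumes "p \<ge> 1"
  shows "(\<forall>n<2. (FinvL c powi (1 - int p) + Lam c p fls_X * fls_deriv (FinvL c)) $$ n = 0)
       \<and> (\<forall>\<beta>. (\<forall>j\<ge>p. \<beta> j = 0)
              \<and> (\<forall>n<2. (FinvL c powi (1 - int p) + LamE \<beta> p fls_X * fls_deriv (FinvL c)) $$ n = 0)
              \<longrightarrow> LamE \<beta> p fls_X = Lam c p fls_X)"
  using Lam_normalised[OF assms] Lexpr_inv_unique[of p _ "alpha c p" c]
  unfolding Lexpr_inv_def order_at_least_def Lam_def by auto

theorem theorem5p1:
  fixes c :: "nat \<Rightarrow> real"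
  shows "(\<forall>k\<ge>1. Lact (Lpos k) 1 c = - (FinvL c ^ (k + 1)))
    \<and> Lact Lzero 1 c = - FinvL c + fls_X * fls_deriv (FinvL c)
    \<and> Lact (Lneg 1) 1 c = - 1 + (1 + fls_const (2 * c 1) * fls_X) * fls_deriv (FinvL c)
    \<and> (\<forall>p\<ge>2. Lact (Lneg p) 1 c
               = - (FinvL c powi (1 - int p)) - Lam c p fls_X * fls_deriv (FinvL c))
    \<and> (\<forall>p\<ge>2. (\<forall>n<2. fls_nth (FinvL c powi (1 - int p) + Lam c p fls_X * fls_deriv (FinvL c)) n = 0)
             \<and> (\<forall>\<beta>. (\<forall>j\<ge>p. \<beta> j = 0)
                    \<and> (\<forall>n<2. fls_nth (FinvL c powi (1 - int p) + LamE \<beta> p fls_X * fls_deriv (FinvL c)) n = 0)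
                    \<longrightarrow> LamE \<beta> p fls_X = Lam c p fls_X))
    \<and> (\<forall>k\<ge>1. Lact (Lpos k) (- int k) c = of_nat k)
    \<and> (\<forall>p\<ge>1. Lact (Lneg p) (int p) c
               = - of_nat p - Lam c p fls_X * fls_deriv (FinvL c ^ p))"
proof -
  have L1: "Lact (Lneg 1) 1 c = - 1 + (1 + fls_const (2 * c 1) * fls_X) * fls_deriv (FinvL c)"
    using Lact_Lneg_finv[of 1 c] unfolding Lam_1 by (simp add: algebra_simps)
  show ?thesis
    using Lact_Lpos Lact_Lzero_finv L1 Lact_Lneg_finv Lam_characterisation Lact_Lneg_finv_power
    by (simp add: power_int_minus fls_of_nat)
qed

end
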